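(* For every integer $k\geq 2$, the direct power $\mathbb{N}^k$ contains uncountably many pairwise non-isomorphic subdirect products.
   Context: $\mathbb{N}=\{1,2,3,\dots\}$ is the free monogenic semigroup (positive integers under addition), and $\mathbb{N}^k$ is its $k$-fold direct power with componentwise addition. A subdirect product of $\mathbb{N}^k$ is a subsemigroup $U\leq\mathbb{N}^k$ such that for each $i=1,\dots,k$ the projection of $U$ onto the $i$-th coordinate is all of $\mathbb{N}$. *)

theory Defs
  imports Main "HOL-Library.Countable_Set"
begin

text \<open>The direct power N^k, N = positive integers, elements represented as
functions nat => nat with positive entries at coordinates 0..k-1 and
value 0 at all other coordinates (canonical representatives).\<close>

definition NPow :: "nat \<Rightarrow> (nat \<Rightarrow> nat) set" where
  "NPow k = {v. (\<forall>i<k. 1 \<le> v i) \<and> (\<forall>i\<ge>k. v i = 0)}"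

definition vadd :: "(nat \<Rightarrow> nat) \<Rightarrow> (nat \<Rightarrow> nat) \<Rightarrow> (nat \<Rightarrow> nat)" where
  "vadd v w = (\<lambda>i. v i + w i)"

definition subsemigroup_NPow :: "nat \<Rightarrow> (nat \<Rightarrow> nat) set \<Rightarrow> bool" where
  "subsemigroup_NPow k U \<longleftrightarrow> U \<subseteq> NPow k \<and> (\<forall>u\<in>U. \<forall>v\<in>U. vadd u v \<in> U)"

definition subdirect_product :: "nat \<Rightarrow> (nat \<Rightarrow> nat) set \<Rightarrow> bool" where
  "subdirect_product k U \<longleftrightarrow> subsemigroup_NPow k U \<and>
     (\<forall>i<k. (\<lambda>v. v i) ` U = {n. 1 \<le> n})"

definition sg_isomorphic :: "(nat \<Rightarrow> nat) set \<Rightarrow> (nat \<Rightarrow> nat) set \<Rightarrow> bool" where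
  "sg_isomorphic U V \<longleftrightarrow> (\<exists>f. bij_betw f U V \<and>
     (\<forall>u\<in>U. \<forall>v\<in>U. f (vadd u v) = vadd (f u) (f v)))"

end

theory Submission
  imports Defs "HOL-Library.Product_Plus"
begin

text \<open>
  To a set \<open>A\<close> of naturals attach the subsemigroup \<open>cone A\<close> of \<open>\<nat>\<^sub>0 \<times> \<nat>\<^sub>0\<close> consisting
  of the positive axis \<open>(x, 0)\<close> and the points \<open>(x, d)\<close>, \<open>d \<ge> 1\<close>, on or right of the
  corner \<open>(2d + \<epsilon>\<^sub>A(d), d)\<close>, where the offset \<open>\<epsilon>\<^sub>A(d) \<in> {2, 3}\<close> records whether
  \<open>d - 1 \<in> A\<close>. Its indecomposable elements are exactly \<open>(1, 0)\<close> and the corners. An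
  isomorphism of two such cones maps indecomposables to indecomposables and must fix \<open>(1, 0)\<close>
  (every decomposable element splits off \<open>(1, 0)\<close>, and \<open>(2, 0)\<close> has height 0); hence it fixes
  the axis pointwise and permutes the corners additively in their height, i.e. fixes every
  corner. Comparing the images of the relations \<open>c\<^sub>d + c\<^sub>1 = c\<^sub>d\<^sub>+\<^sub>1 + (j, 0)\<close> then forces
  \<open>\<epsilon>\<^sub>A = \<epsilon>\<^sub>B\<close>, so \<open>A = B\<close>. Embedding the cones into \<open>\<nat>\<^sup>k\<close> via
  \<open>(x, d) \<mapsto> (x, x + d, \<dots>, x + d)\<close> gives a subdirect product for every \<open>A\<close>, and there are
  uncountably many \<open>A\<close>.
\<close>

lemma uncountable_UNIV_nat_set: "uncountable (UNIV :: nat set set)"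
  using Cantors_theorem[of "UNIV :: nat set"] by (auto simp: uncountable_def)

definition indecomposable :: "'a::plus set \<Rightarrow> 'a \<Rightarrow> bool" where
  "indecomposable S p \<longleftrightarrow> p \<in> S \<and> \<not> (\<exists>q\<in>S. \<exists>r\<in>S. p = q + r)"

lemma additive_bij_indecomposable_iff:
  fixes g :: "'a::plus \<Rightarrow> 'b::plus"
  assumes bij: "bij_betw g S T"
    and additive: "\<And>p q. p \<in> S \<Longrightarrow> q \<in> S \<Longrightarrow> g (p + q) = g p + g q"
    and closed: "\<And>p q. p \<in> S \<Longrightarrow> q \<in> S \<Longrightarrow> p + q \<in> S"
    and p: "p \<in> S"
  shows "indecomposable T (g p) \<longleftrightarrow> indecomposable S p"
proof
  assume indec: "indecomposable T (g p)"
  show "indecomposable S p"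
    unfolding indecomposable_def
  proof (intro conjI p notI)
    assume "\<exists>q\<in>S. \<exists>r\<in>S. p = q + r"
    then obtain q r where "q \<in> S" "r \<in> S" "g p = g q + g r"
      using additive by blast
    moreover have "g q \<in> T" "g r \<in> T"
      using bij_betw_apply[OF bij] \<open>q \<in> S\<close> \<open>r \<in> S\<close> by auto
    ultimately show False
      using indec unfolding indecomposable_def by blast
  qed
next
  assume indec: "indecomposable S p"
  show "indecomposable T (g p)"
    unfolding indecomposable_def
  proof (intro conjI notI)
    show "g p \<in> T"
      using bij_betw_apply[OF bij p] .
    have onto: "g ` S = T" and inj: "inj_on g S"
      using bij by (auto simp: bij_betw_def)
    assume "\<exists>q\<in>T. \<exists>r\<in>T. g p = q + r"
    then obtain q r where qr: "q \<in> S" "r \<in> S" "g p = g q + g r"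
      unfolding onto[symmetric] by blast
    then have "g p = g (q + r)"
      by (simp add: additive)
    then have "p = q + r"
      using inj_onD[OF inj] closed qr p by blast
    with qr indec show False
      unfolding indecomposable_def by blast
  qed
qed

subsection \<open>The cones\<close>

definition offset :: "nat set \<Rightarrow> nat \<Rightarrow> nat" where
  "offset A d = (if d - 1 \<in> A then 2 else 3)"

definition corner :: "nat set \<Rightarrow> nat \<Rightarrow> nat \<times> nat" where
  "corner A d = (2 * d + offset A d, d)"

definition cone :: "nat set \<Rightarrow> (nat \<times> nat) set" where
  "cone A = {p. if snd p = 0 then 1 \<le> fst p else fst (corner A (snd p)) \<le> fst p}"

lemma offset_bounds: "2 \<le> offset A d" "offset A d \<le> 3"
  by (auto simp: offset_def)

lemma mem_cone_iff:
  "(x, d) \<in> cone A \<longleftrightarrow> (if d = 0 then 1 \<le> x else 2 * d + offset A d \<le> x)"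
  by (simp add: cone_def corner_def)

lemma corner_in_cone: "1 \<le> d \<Longrightarrow> corner A d \<in> cone A"
  by (simp add: corner_def mem_cone_iff)

lemma axis_in_cone: "1 \<le> n \<Longrightarrow> (n, 0) \<in> cone A"
  by (simp add: mem_cone_iff)

lemma cone_fst_pos: "p \<in> cone A \<Longrightarrow> 1 \<le> fst p"
  using offset_bounds[of A "snd p"] by (cases p) (auto simp: mem_cone_iff split: if_splits)

lemma cone_add_closed: "p \<in> cone A \<Longrightarrow> q \<in> cone A \<Longrightarrow> p + q \<in> cone A"
  using offset_bounds[of A "snd p"] offset_bounds[of A "snd q"]
    offset_bounds[of A "snd p + snd q"]
  by (cases p, cases q) (auto simp: mem_cone_iff split: if_splits)

lemma cone_decompose:
  assumes "p \<in> cone A" "p \<noteq> (1, 0)" "\<forall>d\<ge>1. p \<noteq> corner A d"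
  shows "(fst p - 1, snd p) \<in> cone A" "p = (1, 0) + (fst p - 1, snd p)"
proof -
  obtain x d where p: "p = (x, d)"
    by (cases p)
  with assms(1) have "1 \<le> x"
    using cone_fst_pos by fastforce
  with p show "p = (1, 0) + (fst p - 1, snd p)"
    by simp
  show "(fst p - 1, snd p) \<in> cone A"
    using assms(1,2) assms(3)[rule_format, of d] p
    by (auto simp: mem_cone_iff corner_def split: if_splits)
qed

lemma unit_not_cone_sum: "q \<in> cone A \<Longrightarrow> r \<in> cone A \<Longrightarrow> (1, 0) \<noteq> q + r"
  using cone_fst_pos[of q A] cone_fst_pos[of r A] by (cases q, cases r) auto

lemma corner_not_cone_sum:
  "1 \<le> d \<Longrightarrow> q \<in> cone A \<Longrightarrow> r \<in> cone A \<Longrightarrow> corner A d \<noteq> q + r"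
  using offset_bounds[of A "snd q"] offset_bounds[of A "snd r"] offset_bounds[of A d]
  by (cases q, cases r) (auto simp: mem_cone_iff corner_def split: if_splits)

lemma indecomposable_cone_iff:
  "indecomposable (cone A) p \<longleftrightarrow> p = (1, 0) \<or> (\<exists>d\<ge>1. p = corner A d)"
proof
  assume "indecomposable (cone A) p"
  then show "p = (1, 0) \<or> (\<exists>d\<ge>1. p = corner A d)"
    using cone_decompose by (metis indecomposable_def mem_cone_iff order_refl)
next
  assume "p = (1, 0) \<or> (\<exists>d\<ge>1. p = corner A d)"
  then show "indecomposable (cone A) p"
    using unit_not_cone_sum corner_not_cone_sum
    by (auto simp: indecomposable_def mem_cone_iff corner_in_cone)
qed

lemma corner_add_corner:
  assumes "1 \<le> d" "1 \<le> d'"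
  shows "corner A d + corner A d' =
           corner A (d + d') + (offset A d + offset A d' - offset A (d + d'), 0)"
    and "1 \<le> offset A d + offset A d' - offset A (d + d')"
  using offset_bounds[of A d] offset_bounds[of A d'] offset_bounds[of A "d + d'"]
  by (auto simp: corner_def)

text \<open>The offsets are recovered from the defects \<open>\<epsilon>(d) + \<epsilon>(1) - \<epsilon>(d + 1)\<close> because their
  differences \<open>\<delta>\<close> satisfy \<open>\<delta>(d + 1) = \<delta>(d) + \<delta>(1)\<close> while \<open>|\<delta>| \<le> 1\<close>.\<close>

lemma eq_if_offset_defects_eq:
  assumes defects: "\<And>d. 1 \<le> d \<Longrightarrow>
    offset A d + offset A 1 - offset A (d + 1) = offset B d + offset B 1 - offset B (d + 1)"
  shows "A = B"
proof -
  define \<delta> where "\<delta> d = int (offset A d) - int (offset B d)" for d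
  have \<delta>_add: "\<delta> (d + 1) = \<delta> d + \<delta> 1" if "1 \<le> d" for d
    using defects[OF that] offset_bounds[of A d] offset_bounds[of A 1] offset_bounds[of A "d + 1"]
      offset_bounds[of B d] offset_bounds[of B 1] offset_bounds[of B "d + 1"]
    by (simp add: \<delta>_def)
  have "\<delta> 2 = 2 * \<delta> 1"
    using \<delta>_add[of 1] by (simp add: numeral_2_eq_2)
  moreover have "\<bar>\<delta> 2\<bar> \<le> 1"
    using offset_bounds[of A 2] offset_bounds[of B 2] by (simp add: \<delta>_def)
  ultimately have \<delta>_one: "\<delta> 1 = 0"
    by linarith
  have "\<delta> d = 0" if "1 \<le> d" for d
    using that
  proof (induction d rule: dec_induct)
    case base
    show ?case by (fact \<delta>_one)
  next
    case (step n)
    then show ?case using \<delta>_add[of n] \<delta>_one by simp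
  qed
  then have offset_eq: "offset A (Suc n) = offset B (Suc n)" for n
    by (simp add: \<delta>_def)
  have "n \<in> A \<longleftrightarrow> n \<in> B" for n
    using offset_eq[of n] by (simp add: offset_def split: if_splits)
  then show ?thesis
    by blast
qed

subsection \<open>Rigidity of the cones\<close>

locale cone_iso =
  fixes A B :: "nat set" and g :: "nat \<times> nat \<Rightarrow> nat \<times> nat"
  assumes bij: "bij_betw g (cone A) (cone B)"
    and additive: "\<And>p q. p \<in> cone A \<Longrightarrow> q \<in> cone A \<Longrightarrow> g (p + q) = g p + g q"
begin

lemma image_eq: "g ` cone A = cone B"
  and inj: "inj_on g (cone A)"
  using bij by (simp_all add: bij_betw_def)

lemma indecomposable_image_iff:
  "p \<in> cone A \<Longrightarrow> indecomposable (cone B) (g p) \<longleftrightarrow> indecomposable (cone A) p"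
  using bij additive cone_add_closed by (rule additive_bij_indecomposable_iff)

lemma fixes_unit: "g (1, 0) = (1, 0)"
proof (rule ccontr)
  assume "g (1, 0) \<noteq> (1, 0)"
  moreover have "indecomposable (cone B) (g (1, 0))"
    using indecomposable_image_iff[OF axis_in_cone] indecomposable_cone_iff by blast
  ultimately obtain c where c: "1 \<le> c" "g (1, 0) = corner B c"
    using indecomposable_cone_iff by blast
  have "(2, 0) \<in> g ` cone A"
    by (simp add: image_eq axis_in_cone)
  then obtain p where p: "p \<in> cone A" "g p = (2, 0)"
    by (metis imageE)
  have "\<not> indecomposable (cone B) (2, 0)"
    by (auto simp: indecomposable_cone_iff corner_def)
  then have "\<not> indecomposable (cone A) p"
    using indecomposable_image_iff[OF p(1)] p(2) by simp
  then have rest: "(fst p - 1, snd p) \<in> cone A" and split: "p = (1, 0) + (fst p - 1, snd p)"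
    using cone_decompose[OF p(1)] indecomposable_cone_iff by blast+
  have "g ((1, 0) + (fst p - 1, snd p)) = g (1, 0) + g (fst p - 1, snd p)"
    using additive[OF axis_in_cone[OF order_refl] rest] .
  then have "g p = g (1, 0) + g (fst p - 1, snd p)"
    using split by metis
  then show False
    using p(2) c by (cases "g (fst p - 1, snd p)") (simp add: corner_def)
qed

lemma fixes_axis: "1 \<le> n \<Longrightarrow> g (n, 0) = (n, 0)"
proof (induction n rule: dec_induct)
  case base
  show ?case by (fact fixes_unit)
next
  case (step m)
  have "g (Suc m, 0) = g ((m, 0) + (1, 0))"
    by simp
  also have "\<dots> = g (m, 0) + g (1, 0)"
    using step(1) by (intro additive axis_in_cone) simp_all
  also have "\<dots> = (m, 0) + (1, 0)"
    by (simp only: step.IH fixes_unit)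
  finally show ?case
    by simp
qed

lemma corner_image: "1 \<le> d \<Longrightarrow> \<exists>c\<ge>1. g (corner A d) = corner B c"
proof -
  assume d: "1 \<le> d"
  have "indecomposable (cone B) (g (corner A d))"
    using indecomposable_image_iff corner_in_cone[OF d] indecomposable_cone_iff d by blast
  moreover have "g (corner A d) \<noteq> (1, 0)"
  proof
    assume "g (corner A d) = (1, 0)"
    then have "corner A d = (1, 0)"
      using inj_onD[OF inj _ corner_in_cone[OF d] axis_in_cone] fixes_unit by simp
    with d show False
      by (simp add: corner_def)
  qed
  ultimately show ?thesis
    using indecomposable_cone_iff by blast
qed

definition height :: "nat \<Rightarrow> nat" where
  "height d = snd (g (corner A d))"

lemma corner_image_height: "1 \<le> d \<Longrightarrow> g (corner A d) = corner B (height d) \<and> 1 \<le> height d"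
  using corner_image by (force simp: height_def corner_def)

lemma image_corner_add_corner:
  assumes "1 \<le> d"
  shows "corner B (height d) + corner B (height 1) =
           corner B (height (d + 1)) + (offset A d + offset A 1 - offset A (d + 1), 0)"
proof -
  note rel = corner_add_corner[OF assms order_refl, of A]
  let ?j = "offset A d + offset A 1 - offset A (d + 1)"
  have "g (corner A d + corner A 1) = g (corner A (d + 1) + (?j, 0))"
    using rel(1) by simp
  then have "g (corner A d) + g (corner A 1) = g (corner A (d + 1)) + g (?j, 0)"
    using assms rel(2) by (simp add: additive corner_in_cone axis_in_cone)
  then show ?thesis
    using assms rel(2) by (simp add: corner_image_height fixes_axis)
qed

lemma height_add: "1 \<le> d \<Longrightarrow> height (d + 1) = height d + height 1"
  using image_corner_add_corner by (simp add: corner_def)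

lemma height_eq:
  assumes "1 \<le> d"
  shows "height d = d"
proof -
  have linear: "height d = d * height 1" if "1 \<le> d" for d
    using that
  proof (induction d rule: dec_induct)
    case (step m)
    then show ?case
      using height_add[of m] by simp
  qed simp
  have "corner B 1 \<in> g ` cone A"
    by (simp add: image_eq corner_in_cone)
  then obtain p where p: "p \<in> cone A" "g p = corner B 1"
    by (metis imageE)
  have "indecomposable (cone B) (corner B 1)"
    by (auto simp: indecomposable_cone_iff)
  then have "indecomposable (cone A) p"
    using indecomposable_image_iff[OF p(1)] p(2) by simp
  moreover have "p \<noteq> (1, 0)"
    using p(2) fixes_unit by (auto simp: corner_def)
  ultimately obtain e where e: "1 \<le> e" "p = corner A e"
    by (meson indecomposable_cone_iff)
  then have "e * height 1 = 1"
    using linear[OF e(1)] p(2) by (simp add: height_def corner_def)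
  then have "height 1 = 1"
    by simp
  with linear[OF assms] show ?thesis
    by simp
qed

theorem eq: "A = B"
proof (rule eq_if_offset_defects_eq)
  fix d :: nat
  assume d: "1 \<le> d"
  have "corner B d + corner B 1 =
          corner B (d + 1) + (offset A d + offset A 1 - offset A (d + 1), 0)"
    using image_corner_add_corner[OF d] d by (simp add: height_eq)
  then show "offset A d + offset A 1 - offset A (d + 1) =
               offset B d + offset B 1 - offset B (d + 1)"
    using corner_add_corner(1)[OF d order_refl, of B] by simp
qed

end

subsection \<open>Embedding into \<open>\<nat>\<^sup>k\<close>\<close>

definition embed_NPow :: "nat \<Rightarrow> nat \<times> nat \<Rightarrow> nat \<Rightarrow> nat" where
  "embed_NPow k p = (\<lambda>i. if i = 0 then fst p else if i < k then fst p + snd p else 0)"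

lemma vadd_embed_NPow: "vadd (embed_NPow k p) (embed_NPow k q) = embed_NPow k (p + q)"
  by (auto simp: vadd_def embed_NPow_def)

lemma inj_embed_NPow:
  assumes "2 \<le> k"
  shows "inj (embed_NPow k)"
proof (rule injI)
  fix p q
  assume "embed_NPow k p = embed_NPow k q"
  then have "embed_NPow k p 0 = embed_NPow k q 0" "embed_NPow k p 1 = embed_NPow k q 1"
    by simp_all
  with assms show "p = q"
    by (simp add: embed_NPow_def prod_eq_iff)
qed

lemma subdirect_product_embed_NPow_cone:
  assumes "2 \<le> k"
  shows "subdirect_product k (embed_NPow k ` cone A)"
  unfolding subdirect_product_def subsemigroup_NPow_def
proof (intro conjI ballI allI impI subsetI)
  fix v assume "v \<in> embed_NPow k ` cone A"
  then show "v \<in> NPow k"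
    using assms cone_fst_pos by (force simp: NPow_def embed_NPow_def)
next
  fix u v assume "u \<in> embed_NPow k ` cone A" "v \<in> embed_NPow k ` cone A"
  then obtain p q where "p \<in> cone A" "q \<in> cone A" "u = embed_NPow k p" "v = embed_NPow k q"
    by blast
  then have "vadd u v = embed_NPow k (p + q)" "p + q \<in> cone A"
    by (simp_all add: vadd_embed_NPow cone_add_closed)
  then show "vadd u v \<in> embed_NPow k ` cone A"
    by (rule image_eqI)
next
  fix i assume i: "i < k"
  show "(\<lambda>v. v i) ` embed_NPow k ` cone A = {n. 1 \<le> n}"
  proof (intro equalityI subsetI)
    fix n assume "n \<in> (\<lambda>v. v i) ` embed_NPow k ` cone A"
    then obtain p where "p \<in> cone A" "n = embed_NPow k p i"
      by blast
    then show "n \<in> {n. 1 \<le> n}"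
      using i cone_fst_pos[of p A] by (simp add: embed_NPow_def)
  next
    fix n :: nat assume "n \<in> {n. 1 \<le> n}"
    then have "(n, 0) \<in> cone A"
      by (simp add: axis_in_cone)
    moreover have "n = embed_NPow k (n, 0) i"
      using i by (simp add: embed_NPow_def)
    ultimately show "n \<in> (\<lambda>v. v i) ` embed_NPow k ` cone A"
      unfolding image_image by (rule image_eqI[rotated])
  qed
qed

lemma sg_isomorphic_image_pullback:
  assumes inj: "inj h" and hom: "\<And>p q. h (p + q) = vadd (h p) (h q)"
    and iso: "sg_isomorphic (h ` S) (h ` T)"
  obtains g where "bij_betw g S T" "\<And>p q. p \<in> S \<Longrightarrow> q \<in> S \<Longrightarrow> g (p + q) = g p + g q"
proof -
  obtain f where f: "bij_betw f (h ` S) (h ` T)"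
    and f_hom: "\<forall>u\<in>h ` S. \<forall>v\<in>h ` S. f (vadd u v) = vadd (f u) (f v)"
    using iso by (auto simp: sg_isomorphic_def)
  define g where "g = inv h \<circ> (f \<circ> h)"
  have "bij_betw h S (h ` S)"
    using inj by (simp add: inj_on_imp_bij_betw inj_on_subset)
  moreover have "bij_betw (inv h) (h ` T) T"
    using inj by (auto intro: bij_betw_inv_into_subset inj_on_imp_bij_betw)
  ultimately have "bij_betw g S T"
    unfolding g_def using f by (blast intro: bij_betw_trans)
  moreover have h_g: "h (g p) = f (h p)" if "p \<in> S" for p
  proof -
    have "f (h p) \<in> h ` T"
      using bij_betw_apply[OF f imageI[OF that]] .
    then obtain t where "f (h p) = h t"
      by (metis imageE)
    then show ?thesis
      by (simp add: g_def inv_f_f[OF inj])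
  qed
  have "g (p + q) = g p + g q" if "p \<in> S" "q \<in> S" for p q
  proof -
    have "g (p + q) = inv h (vadd (f (h p)) (f (h q)))"
      using f_hom that by (simp add: g_def hom)
    also have "\<dots> = inv h (h (g p + g q))"
      using that by (simp add: h_g hom)
    also have "\<dots> = g p + g q"
      by (simp add: inv_f_f[OF inj])
    finally show ?thesis .
  qed
  ultimately show thesis
    using that by blast
qed

theorem theoremB:
  fixes k :: nat
  assumes "k \<ge> 2"
  shows "\<exists>S. S \<subseteq> {U. subdirect_product k U} \<and> uncountable S \<and>
           (\<forall>U\<in>S. \<forall>V\<in>S. U \<noteq> V \<longrightarrow> \<not> sg_isomorphic U V)"
proof (intro exI conjI)
  let ?U = "\<lambda>A. embed_NPow k ` cone A"
  have rigid: "A = B" if iso: "sg_isomorphic (?U A) (?U B)" for A B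
  proof -
    obtain g where "bij_betw g (cone A) (cone B)"
      and "\<And>p q. p \<in> cone A \<Longrightarrow> q \<in> cone A \<Longrightarrow> g (p + q) = g p + g q"
      using sg_isomorphic_image_pullback[OF inj_embed_NPow[OF assms] vadd_embed_NPow[symmetric] iso]
      by blast
    then interpret cone_iso A B g
      by unfold_locales
    show ?thesis
      by (fact eq)
  qed
  show "range ?U \<subseteq> {U. subdirect_product k U}"
    using subdirect_product_embed_NPow_cone assms by auto
  have "inj ?U"
    by (rule injI) (auto simp: sg_isomorphic_def intro!: rigid exI[of _ id])
  then show "uncountable (range ?U)"
    using uncountable_UNIV_nat_set countable_image_inj_on by blast
  show "\<forall>U\<in>range ?U. \<forall>V\<in>range ?U. U \<noteq> V \<longrightarrow> \<not> sg_isomorphic U V"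
    using rigid by blast
qed

end
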